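(* Let $k>0$ and let $A$ be the operator on $L^2(0,1)$ defined by $Af=-if''$ with domain $D(A)=\{f\in H^2(0,1): f(0)=0,\ f'(1)=-ikf(1)\}$. Then $i\mathbb{R}\subset\rho(A)$, i.e. every purely imaginary number belongs to the resolvent set of $A$.
   Context: $L^2(0,1)$ carries its standard inner product $\langle f,g\rangle=\int_0^1 f\bar g\,dx$. $\rho(A)$ denotes the resolvent set of $A$. This operator is the generator of the closed-loop Schrödinger system $w_t=-iw_{xx}$, $w(0,t)=0$, $w_x(1,t)=-ikw(1,t)$. *)

theory Defs
  imports "HOL-Analysis.Analysis"
begin

text \<open>Complex-valued functions on the interval (0,1). Elements of L2(0,1) are represented
  by functions real => complex; equality in L2 is equality almost everywhere on [0,1].\<close>

definition L2_01 :: "(real \<Rightarrow> complex) \<Rightarrow> bool" where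
  "L2_01 f \<longleftrightarrow> f measurable_on {0..1} \<and> (\<lambda>x. (cmod (f x))\<^sup>2) integrable_on {0..1}"

definition L2_norm :: "(real \<Rightarrow> complex) \<Rightarrow> real" where
  "L2_norm f = sqrt (integral {0..1} (\<lambda>x. (cmod (f x))\<^sup>2))"

definition ae01 :: "(real \<Rightarrow> bool) \<Rightarrow> bool" where
  "ae01 P \<longleftrightarrow> negligible {x \<in> {0..1}. \<not> P x}"

text \<open>Sobolev space H2(0,1): f (its continuous representative) with weak derivatives
  f1 = f' (absolutely continuous) and f2 = f'' in L2(0,1).\<close>
definition H2_with_derivs ::
  "(real \<Rightarrow> complex) \<Rightarrow> (real \<Rightarrow> complex) \<Rightarrow> (real \<Rightarrow> complex) \<Rightarrow> bool" where
  "H2_with_derivs f f1 f2 \<longleftrightarrow>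
     L2_01 f2 \<and> f2 integrable_on {0..1} \<and> f1 integrable_on {0..1} \<and>
     (\<forall>x\<in>{0..1}. f1 x = f1 0 + integral {0..x} f2) \<and>
     (\<forall>x\<in>{0..1}. f x = f 0 + integral {0..x} f1)"

text \<open>Graph of the operator A f = -i f'' with domain
  D(A) = {f in H2(0,1) : f(0) = 0, f'(1) = -i k f(1)}:
  A_graph k f u means f is in D(A) and A f = u (in L2, i.e. a.e.).\<close>
definition A_graph :: "real \<Rightarrow> (real \<Rightarrow> complex) \<Rightarrow> (real \<Rightarrow> complex) \<Rightarrow> bool" where
  "A_graph k f u \<longleftrightarrow>
     (\<exists>f1 f2. H2_with_derivs f f1 f2 \<and> f 0 = 0 \<and> f1 1 = - \<i> * complex_of_real k * f 1 \<and>
              L2_01 u \<and> ae01 (\<lambda>x. u x = - \<i> * f2 x))"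

text \<open>Resolvent set of A: lambda such that lambda I - A : D(A) -> L2 is bijective
  with bounded inverse.  Surjectivity: every g in L2 is attained; injectivity and
  boundedness of the inverse: every preimage f of g satisfies ||f|| <= C ||g||.\<close>
definition resolvent_set_A :: "real \<Rightarrow> complex set" where
  "resolvent_set_A k = {z. \<exists>C. \<forall>g. L2_01 g \<longrightarrow>
      (\<exists>f u. A_graph k f u \<and> ae01 (\<lambda>x. z * f x - u x = g x)) \<and>
      (\<forall>f u. A_graph k f u \<and> ae01 (\<lambda>x. z * f x - u x = g x) \<longrightarrow> L2_norm f \<le> C * L2_norm g)}"

end

theory Submission
  imports Defs
begin

(* For z = i omega the resolvent equation (z - A) f = g is the boundary value problem
     f'' + omega f = -i g,   f(0) = 0,   f'(1) = -i k f(1).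
   Let p, q solve y'' = -omega y with p(0) = q'(0) = 0 and p'(0) = q(0) = 1 (sine/cosine, x/1 or
   sinh/cosh according to the sign of omega); they are real-valued and their Wronskian is 1.
   Uniqueness: the difference d of two solutions solves the homogeneous problem, so the Wronskian
   gives d = d'(0) p, and the condition at 1 becomes d'(0) (p'(1) + i k p(1)) = 0. Since p(1) and
   p'(1) are real, not both zero, and k > 0, this determinant does not vanish.
   Existence: g is only square integrable, so first integrate it twice to G2; the remainder
   v = f + i G2 must solve v'' + omega v = i omega G2, whose right-hand side is continuous, so
   variation of constants applies classically. Adding a multiple of p fixes the condition at 1.
   Every step is bounded by a constant times ||g||_1 <= ||g||_2, which bounds the resolvent. *)

section \<open>Square-integrable functions on the unit interval\<close>

lemma L2_01_borel_measurable:
  assumes "L2_01 g"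
  shows "g \<in> borel_measurable (lebesgue_on {0..1})"
  using assms by (simp add: L2_01_def measurable_on_iff_borel_measurable)

lemma L2_01_square_integrable:
  assumes "L2_01 g"
  shows "(\<lambda>x. (cmod (g x))\<^sup>2) integrable_on {0..1}"
  using assms by (simp add: L2_01_def)

lemma L2_01_absolutely_integrable:
  assumes "L2_01 g"
  shows "g absolutely_integrable_on {0..1}"
proof (rule measurable_bounded_by_integrable_imp_absolutely_integrable)
  show "(\<lambda>x. 1 + (cmod (g x))\<^sup>2) integrable_on {0..1}"
    by (intro integrable_add integrable_const_ivl L2_01_square_integrable assms)
  show "norm (g x) \<le> 1 + (cmod (g x))\<^sup>2" for x
    using sum_squares_bound[of "norm (g x)" 1] norm_ge_zero[of "g x"]
    unfolding power2_eq_square by linarith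
qed (simp_all add: L2_01_borel_measurable assms)

lemma le_sqrt_if_le_am_gm:
  fixes a I :: real
  assumes "0 \<le> I" and am_gm: "\<And>t. t > 0 \<Longrightarrow> a \<le> t / 2 + I / (2 * t)"
  shows "a \<le> sqrt I"
proof (cases "I = 0")
  case True
  have "a \<le> 0"
  proof (rule field_le_epsilon)
    show "a \<le> 0 + e" if "e > 0" for e :: real
      using am_gm[of e] that True by simp
  qed
  then show ?thesis using True by simp
next
  case False
  then have "sqrt I > 0" using \<open>0 \<le> I\<close> by simp
  then have "a * sqrt I \<le> sqrt I * sqrt I"
    using am_gm[of "sqrt I"] \<open>0 \<le> I\<close> by (simp add: field_simps)
  then show ?thesis
    using \<open>sqrt I > 0\<close> by (rule mult_right_le_imp_le)
qed

(* Cauchy-Schwarz, from the pointwise bound |g| <= t/2 + |g|^2/(2t) optimised over t > 0. *)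
lemma L1_norm_le_L2_norm:
  assumes "L2_01 g"
  shows "integral {0..1} (\<lambda>x. norm (g x)) \<le> L2_norm g"
  unfolding L2_norm_def
proof (rule le_sqrt_if_le_am_gm)
  note sq = L2_01_square_integrable[OF assms]
  show "0 \<le> integral {0..1} (\<lambda>x. (cmod (g x))\<^sup>2)"
    by (rule integral_nonneg[OF sq]) simp
  fix t :: real assume "t > 0"
  have "norm (g x) \<le> t / 2 + (cmod (g x))\<^sup>2 / (2 * t)" for x
    using \<open>t > 0\<close> sum_squares_bound[of "norm (g x)" t]
    by (simp add: field_simps power2_eq_square)
  then have "integral {0..1} (\<lambda>x. norm (g x))
      \<le> integral {0..1} (\<lambda>x. t / 2 + (cmod (g x))\<^sup>2 / (2 * t))"
    using L2_01_absolutely_integrable[OF assms] sq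
    by (intro integral_le integrable_add integrable_const_ivl integrable_on_divide)
       (simp_all add: absolutely_integrable_on_def)
  also have "\<dots> = t / 2 + integral {0..1} (\<lambda>x. (cmod (g x))\<^sup>2) / (2 * t)"
    using sq by (subst integral_add) (simp_all add: integrable_on_divide integrable_const_ivl)
  finally show "integral {0..1} (\<lambda>x. norm (g x)) \<le> t / 2 + integral {0..1} (\<lambda>x. (cmod (g x))\<^sup>2) / (2 * t)" .
qed

lemma L2_norm_le_bound:
  fixes f :: "real \<Rightarrow> complex"
  assumes "continuous_on {0..1} f" and B: "\<And>x. x \<in> {0..1} \<Longrightarrow> norm (f x) \<le> B"
  shows "L2_norm f \<le> B"
proof -
  have "0 \<le> B" using B[of 0] by (simp add: order_trans[OF norm_ge_zero])
  have "integral {0..1} (\<lambda>x. (cmod (f x))\<^sup>2) \<le> integral {0..1} (\<lambda>x::real. B\<^sup>2)"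
    using assms by (intro integral_le integrable_continuous_real continuous_intros power_mono) auto
  then have "integral {0..1} (\<lambda>x. (cmod (f x))\<^sup>2) \<le> B\<^sup>2"
    by simp
  then have "L2_norm f \<le> sqrt (B\<^sup>2)"
    unfolding L2_norm_def by (rule real_sqrt_le_mono)
  then show ?thesis using \<open>0 \<le> B\<close> by simp
qed

lemma continuous_on_Icc_norm_bound:
  fixes f :: "real \<Rightarrow> 'a::real_normed_vector"
  assumes "continuous_on {a..b} f"
  shows "\<exists>B. \<forall>x\<in>{a..b}. norm (f x) \<le> B"
  using compact_imp_bounded[OF compact_continuous_image[OF assms compact_Icc]]
  unfolding bounded_iff by blast

lemma L2_01_add_continuous:
  fixes g F :: "real \<Rightarrow> complex"
  assumes g: "L2_01 g" and F: "continuous_on {0..1} F"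
  shows "L2_01 (\<lambda>x. a * g x + F x)"
proof -
  obtain B where B: "\<forall>x\<in>{0..1}. norm (F x) \<le> B"
    using continuous_on_Icc_norm_bound[OF F] by blast
  have "F \<in> borel_measurable (lebesgue_on {0..1})"
    using F by (simp add: continuous_imp_measurable_on_sets_lebesgue)
  then have meas: "(\<lambda>x. a * g x + F x) \<in> borel_measurable (lebesgue_on {0..1})"
    using L2_01_borel_measurable[OF g] by measurable
  have bound: "norm ((cmod (a * g x + F x))\<^sup>2) \<le> 2 * (cmod a)\<^sup>2 * (cmod (g x))\<^sup>2 + 2 * B\<^sup>2"
    if "x \<in> {0..1}" for x
  proof -
    have "(cmod (a * g x + F x))\<^sup>2 \<le> (cmod (a * g x) + cmod (F x))\<^sup>2"
      by (intro power_mono norm_triangle_ineq) simp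
    also have "\<dots> \<le> 2 * (cmod (a * g x))\<^sup>2 + 2 * (cmod (F x))\<^sup>2"
      using sum_squares_bound[of "cmod (a * g x)" "cmod (F x)"] by (simp add: power2_eq_square algebra_simps)
    finally have "(cmod (a * g x + F x))\<^sup>2 \<le> 2 * (cmod a)\<^sup>2 * (cmod (g x))\<^sup>2 + 2 * (cmod (F x))\<^sup>2"
      by (simp add: norm_mult power_mult_distrib)
    moreover have "(cmod (F x))\<^sup>2 \<le> B\<^sup>2"
      using B that by (intro power_mono) simp_all
    ultimately show ?thesis by simp
  qed
  have "(\<lambda>x. (cmod (a * g x + F x))\<^sup>2) \<in> borel_measurable (lebesgue_on {0..1})"
    using meas by measurable
  moreover have "(\<lambda>x. 2 * (cmod a)\<^sup>2 * (cmod (g x))\<^sup>2 + 2 * B\<^sup>2) integrable_on {0..1}"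
    by (intro integrable_add integrable_on_mult_right integrable_const_ivl L2_01_square_integrable g)
  ultimately have "(\<lambda>x. (cmod (a * g x + F x))\<^sup>2) integrable_on {0..1}"
    using bound by (rule measurable_bounded_by_integrable_imp_integrable) auto
  with meas show ?thesis
    by (simp add: L2_01_def measurable_on_iff_borel_measurable)
qed

lemma ae01_all:
  assumes "\<And>x. x \<in> {0..1} \<Longrightarrow> P x"
  shows "ae01 P"
proof -
  have empty: "{x \<in> {0..1}. \<not> P x} = {}" using assms by blast
  show ?thesis unfolding ae01_def empty by (rule negligible_empty)
qed

lemma ae01_elim2:
  assumes "ae01 P" "ae01 Q" "\<And>x. P x \<Longrightarrow> Q x \<Longrightarrow> R x"
  shows "ae01 R"
proof -
  have "negligible ({x \<in> {0..1}. \<not> P x} \<union> {x \<in> {0..1}. \<not> Q x})"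
    using assms(1,2) unfolding ae01_def by (rule negligible_Un)
  moreover have "{x \<in> {0..1}. \<not> R x} \<subseteq> {x \<in> {0..1}. \<not> P x} \<union> {x \<in> {0..1}. \<not> Q x}"
    using assms(3) by blast
  ultimately show ?thesis
    unfolding ae01_def by (rule negligible_subset)
qed

lemma L2_norm_cong: "(\<And>x. x \<in> {0..1} \<Longrightarrow> f x = g x) \<Longrightarrow> L2_norm f = L2_norm g"
  unfolding L2_norm_def by (metis (no_types, lifting) integral_cong)

section \<open>Antiderivatives and classical derivatives\<close>

lemma norm_mult_le_mult:
  fixes a b :: "'a::real_normed_div_algebra"
  shows "norm a \<le> M \<Longrightarrow> norm b \<le> N \<Longrightarrow> norm (a * b) \<le> M * N"
  by (simp add: norm_mult mult_mono')

lemma norm_integral_le_on_unit_interval: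
  fixes F :: "real \<Rightarrow> 'a::euclidean_space"
  assumes "x \<in> {0..1}" "F integrable_on {0..x}" "\<And>t. t \<in> {0..x} \<Longrightarrow> norm (F t) \<le> B"
  shows "norm (integral {0..x} F) \<le> B"
proof -
  have "norm (F 0) \<le> B" using assms(1,3) by simp
  then have "0 \<le> B" by (rule order_trans[OF norm_ge_zero])
  have "norm (integral {0..x} F) \<le> integral {0..x} (\<lambda>t. B)"
    using assms(2,3) by (intro integral_norm_bound_integral) auto
  also have "\<dots> = B * x" using assms(1) by simp
  also have "\<dots> \<le> B" using assms(1) \<open>0 \<le> B\<close> by (simp add: mult_left_le)
  finally show ?thesis .
qed

lemma fundamental_theorem_of_calculus_unit_interval:
  fixes F F' :: "real \<Rightarrow> 'a::banach"
  assumes x: "x \<in> {0..1}"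
    and F: "\<And>t. t \<in> {0..1} \<Longrightarrow> (F has_vector_derivative F' t) (at t within {0..1})"
  shows "(F' has_integral F x - F 0) {0..x}"
proof (rule fundamental_theorem_of_calculus)
  show "0 \<le> x" using x by simp
  show "(F has_vector_derivative F' t) (at t within {0..x})" if "t \<in> {0..x}" for t
    by (rule has_vector_derivative_within_subset[OF F]) (use that x in auto)
qed

lemma L2_01_iterated_antiderivatives:
  assumes g: "L2_01 g"
  obtains G1 G2 where "continuous_on {0..1} G1" and "continuous_on {0..1} G2"
    and "\<And>x. x \<in> {0..1} \<Longrightarrow> (g has_integral G1 x) {0..x}"
    and "\<And>x. x \<in> {0..1} \<Longrightarrow> (G1 has_integral G2 x) {0..x}"
    and "\<And>x. x \<in> {0..1} \<Longrightarrow> norm (G1 x) \<le> L2_norm g \<and> norm (G2 x) \<le> L2_norm g"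
proof -
  have g_int: "g integrable_on {0..1}" and norm_g: "(\<lambda>x. norm (g x)) integrable_on {0..1}"
    using L2_01_absolutely_integrable[OF g] by (auto simp: absolutely_integrable_on_def)
  define G1 where "G1 x = integral {0..x} g" for x
  define G2 where "G2 x = integral {0..x} G1" for x
  have G1_cont: "continuous_on {0..1} G1"
    unfolding G1_def using g_int by (rule indefinite_integral_continuous_1)
  have G1_bound: "norm (G1 x) \<le> L2_norm g" if x: "x \<in> {0..1}" for x
  proof -
    have "norm (G1 x) \<le> integral {0..x} (\<lambda>t. norm (g t))"
      unfolding G1_def using x
      by (intro integral_norm_bound_integral integrable_on_subinterval[OF g_int]
          integrable_on_subinterval[OF norm_g]) auto
    also have "\<dots> \<le> integral {0..1} (\<lambda>t. norm (g t))"
      using x by (intro integral_subset_le integrable_on_subinterval[OF norm_g] norm_g) auto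
    also have "\<dots> \<le> L2_norm g" using g by (rule L1_norm_le_L2_norm)
    finally show ?thesis .
  qed
  have G1_int: "(G1 has_integral G2 x) {0..x}" if "x \<in> {0..1}" for x
    unfolding G2_def using that
    by (intro integrable_integral integrable_continuous_real continuous_on_subset[OF G1_cont]) auto
  show thesis
  proof
    show "continuous_on {0..1} G1" by (rule G1_cont)
    show "continuous_on {0..1} G2"
      unfolding G2_def by (intro indefinite_integral_continuous_1 integrable_continuous_real G1_cont)
    fix x :: real assume x: "x \<in> {0..1}"
    show "(g has_integral G1 x) {0..x}"
      unfolding G1_def using x by (intro integrable_integral integrable_on_subinterval[OF g_int]) auto
    show "(G1 has_integral G2 x) {0..x}" using x by (rule G1_int)
    have "norm (G2 x) \<le> L2_norm g"
      unfolding G2_def using x G1_int[OF x] G1_bound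
      by (intro norm_integral_le_on_unit_interval) auto
    with G1_bound[OF x] show "norm (G1 x) \<le> L2_norm g \<and> norm (G2 x) \<le> L2_norm g" ..
  qed
qed

lemma H2_with_derivs_iff_has_integral:
  "H2_with_derivs f f1 f2 \<longleftrightarrow> L2_01 f2 \<and>
    (\<forall>x\<in>{0..1}. (f1 has_integral f x - f 0) {0..x} \<and> (f2 has_integral f1 x - f1 0) {0..x})"
    (is "_ \<longleftrightarrow> _ \<and> (\<forall>x\<in>{0..1}. ?int x)")
proof
  assume "H2_with_derivs f f1 f2"
  then have f2: "L2_01 f2" and int: "f1 integrable_on {0..1}" "f2 integrable_on {0..1}"
    and f1_eq: "\<And>x. x \<in> {0..1} \<Longrightarrow> f1 x = f1 0 + integral {0..x} f2"
    and f_eq: "\<And>x. x \<in> {0..1} \<Longrightarrow> f x = f 0 + integral {0..x} f1"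
    unfolding H2_with_derivs_def by blast+
  have "?int x" if x: "x \<in> {0..1}" for x
  proof -
    have sub: "{0..x} \<subseteq> {0..1}" using x by auto
    have "(f1 has_integral integral {0..x} f1) {0..x}" "(f2 has_integral integral {0..x} f2) {0..x}"
      using integrable_on_subinterval[OF int(1) sub] integrable_on_subinterval[OF int(2) sub]
      by (simp_all add: integrable_integral)
    then show ?thesis using f_eq[OF x] f1_eq[OF x] by simp
  qed
  with f2 show "L2_01 f2 \<and> (\<forall>x\<in>{0..1}. ?int x)" by blast
next
  assume "L2_01 f2 \<and> (\<forall>x\<in>{0..1}. ?int x)"
  then have f2: "L2_01 f2" and int: "\<And>x. x \<in> {0..1} \<Longrightarrow> ?int x" by blast+
  show "H2_with_derivs f f1 f2"
    unfolding H2_with_derivs_def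
  proof (intro conjI ballI f2)
    show "f2 integrable_on {0..1}" "f1 integrable_on {0..1}" using int[of 1] by auto
    show "f1 x = f1 0 + integral {0..x} f2" "f x = f 0 + integral {0..x} f1" if "x \<in> {0..1}" for x
      using integral_unique[OF conjunct1[OF int[OF that]]] integral_unique[OF conjunct2[OF int[OF that]]]
      by simp_all
  qed
qed

lemma wronskian_constant:
  fixes u u' v v' :: "real \<Rightarrow> complex"
  assumes "convex S"
    and u: "\<And>x. x \<in> S \<Longrightarrow> (u has_vector_derivative u' x) (at x within S)"
    and u': "\<And>x. x \<in> S \<Longrightarrow> (u' has_vector_derivative c * u x) (at x within S)"
    and v: "\<And>x. x \<in> S \<Longrightarrow> (v has_vector_derivative v' x) (at x within S)"
    and v': "\<And>x. x \<in> S \<Longrightarrow> (v' has_vector_derivative c * v x) (at x within S)"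
    and "a \<in> S" "x \<in> S"
  shows "u' x * v x - u x * v' x = u' a * v a - u a * v' a"
proof -
  have "((\<lambda>x. u' x * v x - u x * v' x) has_vector_derivative 0) (at t within S)" if "t \<in> S" for t
  proof -
    have "((\<lambda>x. u' x * v x - u x * v' x) has_vector_derivative
        u' t * v' t + c * u t * v t - (u t * (c * v t) + u' t * v' t)) (at t within S)"
      using that by (intro has_vector_derivative_diff has_vector_derivative_mult u u' v v')
    then show ?thesis by (simp add: algebra_simps)
  qed
  then obtain C where "\<And>x. x \<in> S \<Longrightarrow> u' x * v x - u x * v' x = C"
    using has_vector_derivative_zero_constant[OF \<open>convex S\<close>, of "\<lambda>x. u' x * v x - u x * v' x"]
    by blast
  then show ?thesis using assms(6,7) by simp
qed

lemma weak_solution_has_vector_derivatives: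
  fixes d d' d'' :: "real \<Rightarrow> complex"
  assumes "d' integrable_on {0..1}"
    and d': "\<And>x. x \<in> {0..1} \<Longrightarrow> d' x = d' 0 + integral {0..x} d''"
    and d: "\<And>x. x \<in> {0..1} \<Longrightarrow> d x = d 0 + integral {0..x} d'"
    and ae: "ae01 (\<lambda>x. d'' x = c * d x)"
    and x: "x \<in> {0..1}"
  shows "(d' has_vector_derivative c * d x) (at x within {0..1})"
    and "(d has_vector_derivative d' x) (at x within {0..1})"
proof -
  have "continuous_on {0..1} (\<lambda>x. d 0 + integral {0..x} d')"
    by (intro continuous_intros indefinite_integral_continuous_1 assms(1))
  then have "continuous_on {0..1} d"
    by (rule continuous_on_eq) (rule d[symmetric])
  then have cd: "continuous_on {0..1} (\<lambda>t. c * d t)"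
    by (intro continuous_intros)
  have d'_eq: "d' y = d' 0 + integral {0..y} (\<lambda>t. c * d t)" if "y \<in> {0..1}" for y
  proof -
    have "integral {0..y} d'' = integral {0..y} (\<lambda>t. c * d t)"
      by (rule integral_spike[OF ae[unfolded ae01_def]]) (use that in auto)
    then show ?thesis using d'[OF that] by simp
  qed
  have dd': "(d' has_vector_derivative c * d y) (at y within {0..1})" if "y \<in> {0..1}" for y
  proof (rule has_vector_derivative_transform[OF that d'_eq])
    show "((\<lambda>y. d' 0 + integral {0..y} (\<lambda>t. c * d t)) has_vector_derivative c * d y)
        (at y within {0..1})"
      using has_vector_derivative_add[OF has_vector_derivative_const
          integral_has_vector_derivative[OF cd that]] by simp
  qed
  then show "(d' has_vector_derivative c * d x) (at x within {0..1})" using x .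
  have "continuous_on {0..1} d'"
    using dd' by (rule continuous_on_vector_derivative)
  show "(d has_vector_derivative d' x) (at x within {0..1})"
  proof (rule has_vector_derivative_transform[OF x d])
    show "((\<lambda>y. d 0 + integral {0..y} d') has_vector_derivative d' x) (at x within {0..1})"
      using has_vector_derivative_add[OF has_vector_derivative_const
          integral_has_vector_derivative[OF \<open>continuous_on {0..1} d'\<close> x]] by simp
  qed
qed

section \<open>A fundamental system of the equation y'' = -w y\<close>

locale fundamental_system =
  fixes w :: real and p p' q q' :: "real \<Rightarrow> complex"
  assumes p_derivative: "\<And>x. (p has_vector_derivative p' x) (at x)"
    and p'_derivative: "\<And>x. (p' has_vector_derivative - of_real w * p x) (at x)"
    and q_derivative: "\<And>x. (q has_vector_derivative q' x) (at x)"
    and q'_derivative: "\<And>x. (q' has_vector_derivative - of_real w * q x) (at x)"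
    and initial_values: "p 0 = 0" "p' 0 = 1" "q 0 = 1" "q' 0 = 0"
begin

lemmas derivatives_within =
  p_derivative[THEN has_vector_derivative_at_within]
  p'_derivative[THEN has_vector_derivative_at_within]
  q_derivative[THEN has_vector_derivative_at_within]
  q'_derivative[THEN has_vector_derivative_at_within]

lemma continuous_on_fundamental_system:
  "continuous_on S p" "continuous_on S p'" "continuous_on S q" "continuous_on S q'"
  using derivatives_within by (intro continuous_on_vector_derivative; blast)+

lemma wronskian_eq_1: "q x * p' x - p x * q' x = 1"
  using wronskian_constant[OF convex_UNIV p_derivative p'_derivative q_derivative q'_derivative,
      of 0 x]
  by (simp add: initial_values algebra_simps)

lemma homogeneous_solution_eq:
  assumes d: "\<And>x. x \<in> {0..1} \<Longrightarrow> (d has_vector_derivative d' x) (at x within {0..1})"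
    and d': "\<And>x. x \<in> {0..1} \<Longrightarrow> (d' has_vector_derivative - of_real w * d x) (at x within {0..1})"
    and "d 0 = 0" and x: "x \<in> {0..1}"
  shows "d x = d' 0 * p x" and "d' x = d' 0 * p' x"
proof -
  have Wp: "d' x * p x - d x * p' x = 0"
    using wronskian_constant[OF convex_real_interval(5) d d' derivatives_within(1,2), of 0 x] x
    by (simp add: initial_values \<open>d 0 = 0\<close>)
  have Wq: "d' x * q x - d x * q' x = d' 0"
    using wronskian_constant[OF convex_real_interval(5) d d' derivatives_within(3,4), of 0 x] x
    by (simp add: initial_values \<open>d 0 = 0\<close>)
  have "d x = d x * (q x * p' x - p x * q' x)" by (simp add: wronskian_eq_1)
  also have "\<dots> = p x * (d' x * q x - d x * q' x) - q x * (d' x * p x - d x * p' x)"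
    by (simp add: algebra_simps)
  finally show "d x = d' 0 * p x" by (simp add: Wp Wq)
  have "d' x = d' x * (q x * p' x - p x * q' x)" by (simp add: wronskian_eq_1)
  also have "\<dots> = p' x * (d' x * q x - d x * q' x) - q' x * (d' x * p x - d x * p' x)"
    by (simp add: algebra_simps)
  finally show "d' x = d' 0 * p' x" by (simp add: Wp Wq)
qed

definition fundamental_bound :: "real \<Rightarrow> bool" where
  "fundamental_bound M \<longleftrightarrow>
     (\<forall>x\<in>{0..1}. norm (p x) \<le> M \<and> norm (p' x) \<le> M \<and> norm (q x) \<le> M \<and> norm (q' x) \<le> M)"

lemma fundamental_bound_exists: "\<exists>M. fundamental_bound M"
proof -
  have "continuous_on {0..1} (\<lambda>x. (p x, p' x, q x, q' x))"
    by (intro continuous_intros continuous_on_fundamental_system)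
  then obtain M where M: "\<forall>x\<in>{0..1}. norm (p x, p' x, q x, q' x) \<le> M"
    using continuous_on_Icc_norm_bound by blast
  have "norm (p x) \<le> M \<and> norm (p' x) \<le> M \<and> norm (q x) \<le> M \<and> norm (q' x) \<le> M"
    if "x \<in> {0..1}" for x
  proof -
    have "norm (p x, p' x, q x, q' x) \<le> M" using M that by blast
    moreover have "norm (p x) \<le> norm (p x, p' x, q x, q' x)"
      and "norm (p' x) \<le> norm (p' x, q x, q' x)"
      and "norm (p' x, q x, q' x) \<le> norm (p x, p' x, q x, q' x)"
      and "norm (q x) \<le> norm (q x, q' x)" and "norm (q x, q' x) \<le> norm (p' x, q x, q' x)"
      and "norm (q' x) \<le> norm (q x, q' x)"
      by (rule norm_fst_le norm_snd_le)+
    ultimately show ?thesis by linarith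
  qed
  then show ?thesis unfolding fundamental_bound_def by blast
qed

definition variation_of_constants :: "(real \<Rightarrow> complex) \<Rightarrow> real \<Rightarrow> complex" where
  "variation_of_constants r x =
     p x * integral {0..x} (\<lambda>t. q t * r t) - q x * integral {0..x} (\<lambda>t. p t * r t)"

definition variation_of_constants' :: "(real \<Rightarrow> complex) \<Rightarrow> real \<Rightarrow> complex" where
  "variation_of_constants' r x =
     p' x * integral {0..x} (\<lambda>t. q t * r t) - q' x * integral {0..x} (\<lambda>t. p t * r t)"

lemma variation_of_constants_0: "variation_of_constants r 0 = 0" "variation_of_constants' r 0 = 0"
  by (simp_all add: variation_of_constants_def variation_of_constants'_def)

lemma variation_of_constants_has_vector_derivative:
  assumes r: "continuous_on {0..1} r" and x: "x \<in> {0..1}"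
  shows "(variation_of_constants r has_vector_derivative variation_of_constants' r x)
      (at x within {0..1})"
    and "(variation_of_constants' r has_vector_derivative
      - of_real w * variation_of_constants r x + r x) (at x within {0..1})"
proof -
  have qr: "continuous_on {0..1} (\<lambda>t. q t * r t)" and pr: "continuous_on {0..1} (\<lambda>t. p t * r t)"
    by (intro continuous_intros continuous_on_fundamental_system r)+
  note A = integral_has_vector_derivative[OF qr x] and B = integral_has_vector_derivative[OF pr x]
  show "(variation_of_constants r has_vector_derivative variation_of_constants' r x)
      (at x within {0..1})"
    using has_vector_derivative_diff[OF has_vector_derivative_mult[OF derivatives_within(1) A]
        has_vector_derivative_mult[OF derivatives_within(3) B]]
    by (simp add: variation_of_constants_def[abs_def] variation_of_constants'_def algebra_simps)
  let ?A = "integral {0..x} (\<lambda>t. q t * r t)" and ?B = "integral {0..x} (\<lambda>t. p t * r t)"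
  have "(variation_of_constants' r has_vector_derivative
      p' x * (q x * r x) + - of_real w * p x * ?A - (q' x * (p x * r x) + - of_real w * q x * ?B))
      (at x within {0..1})"
    unfolding variation_of_constants'_def[abs_def]
    by (intro has_vector_derivative_diff has_vector_derivative_mult derivatives_within A B)
  moreover have "p' x * (q x * r x) + - of_real w * p x * ?A - (q' x * (p x * r x) + - of_real w * q x * ?B)
      = - of_real w * variation_of_constants r x + r x * (q x * p' x - p x * q' x)"
    by (simp add: variation_of_constants_def algebra_simps)
  ultimately show "(variation_of_constants' r has_vector_derivative
      - of_real w * variation_of_constants r x + r x) (at x within {0..1})"
    by (simp add: wronskian_eq_1)
qed

lemma variation_of_constants_has_integral:
  assumes r: "continuous_on {0..1} r" and x: "x \<in> {0..1}"
  shows "(variation_of_constants' r has_integral variation_of_constants r x) {0..x}"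
    and "((\<lambda>t. - of_real w * variation_of_constants r t + r t) has_integral
      variation_of_constants' r x) {0..x}"
  using fundamental_theorem_of_calculus_unit_interval[OF x
      variation_of_constants_has_vector_derivative(1)[OF r]]
    fundamental_theorem_of_calculus_unit_interval[OF x
      variation_of_constants_has_vector_derivative(2)[OF r]]
  by (simp_all add: variation_of_constants_0)

lemma variation_of_constants_bound:
  assumes M: "fundamental_bound M" and r: "continuous_on {0..1} r"
    and R: "\<And>t. t \<in> {0..1} \<Longrightarrow> norm (r t) \<le> R" and x: "x \<in> {0..1}"
  shows "norm (variation_of_constants r x) \<le> 2 * M\<^sup>2 * R"
    and "norm (variation_of_constants' r x) \<le> 2 * M\<^sup>2 * R"
proof -
  have pqM: "norm (p t) \<le> M" "norm (p' t) \<le> M" "norm (q t) \<le> M" "norm (q' t) \<le> M"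
    if "t \<in> {0..1}" for t
    using M that unfolding fundamental_bound_def by blast+
  have "{0..x} \<subseteq> {0..1}" using x by auto
  then have IA: "norm (integral {0..x} (\<lambda>t. q t * r t)) \<le> M * R"
    and IB: "norm (integral {0..x} (\<lambda>t. p t * r t)) \<le> M * R"
    using x pqM R
    by (intro norm_integral_le_on_unit_interval norm_mult_le_mult integrable_continuous_real
        continuous_on_subset[OF continuous_on_mult[OF continuous_on_fundamental_system(3) r]]
        continuous_on_subset[OF continuous_on_mult[OF continuous_on_fundamental_system(1) r]];
        force)+
  have "norm (variation_of_constants r x) \<le> M * (M * R) + M * (M * R)"
    unfolding variation_of_constants_def
    by (intro order_trans[OF norm_triangle_ineq4] add_mono norm_mult_le_mult IA IB pqM x)
  moreover have "norm (variation_of_constants' r x) \<le> M * (M * R) + M * (M * R)"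
    unfolding variation_of_constants'_def
    by (intro order_trans[OF norm_triangle_ineq4] add_mono norm_mult_le_mult IA IB pqM x)
  ultimately show "norm (variation_of_constants r x) \<le> 2 * M\<^sup>2 * R"
    and "norm (variation_of_constants' r x) \<le> 2 * M\<^sup>2 * R"
    by (simp_all add: power2_eq_square algebra_simps)
qed

lemma H2_with_derivs_add_homogeneous:
  assumes "H2_with_derivs u u' (\<lambda>x. h x - of_real w * u x)"
  shows "H2_with_derivs (\<lambda>x. u x + c * p x) (\<lambda>x. u' x + c * p' x)
    (\<lambda>x. h x - of_real w * (u x + c * p x))"
proof -
  have L2: "L2_01 (\<lambda>x. h x - of_real w * u x)"
    and int: "\<And>x. x \<in> {0..1} \<Longrightarrow> (u' has_integral u x - u 0) {0..x}
      \<and> ((\<lambda>x. h x - of_real w * u x) has_integral u' x - u' 0) {0..x}"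
    using assms unfolding H2_with_derivs_iff_has_integral by blast+
  show ?thesis
    unfolding H2_with_derivs_iff_has_integral
  proof (intro conjI ballI)
    have "L2_01 (\<lambda>x. 1 * (h x - of_real w * u x) + (- of_real w * c) * p x)"
      using L2 by (rule L2_01_add_continuous) (intro continuous_intros continuous_on_fundamental_system)
    then show "L2_01 (\<lambda>x. h x - of_real w * (u x + c * p x))"
      by (simp add: algebra_simps)
    fix x :: real assume x: "x \<in> {0..1}"
    show "((\<lambda>x. u' x + c * p' x) has_integral u x + c * p x - (u 0 + c * p 0)) {0..x}"
      using has_integral_add[OF conjunct1[OF int[OF x]] has_integral_mult_right[OF
          fundamental_theorem_of_calculus_unit_interval[OF x derivatives_within(1)], of c]]
      by (simp add: algebra_simps)
    show "((\<lambda>x. h x - of_real w * (u x + c * p x)) has_integral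
        u' x + c * p' x - (u' 0 + c * p' 0)) {0..x}"
      using has_integral_add[OF conjunct2[OF int[OF x]] has_integral_mult_right[OF
          fundamental_theorem_of_calculus_unit_interval[OF x derivatives_within(2)], of c]]
      by (simp add: algebra_simps)
  qed
qed

lemma particular_solution:
  fixes g :: "real \<Rightarrow> complex"
  assumes g: "L2_01 g" and M: "fundamental_bound M"
  obtains u u' where "continuous_on {0..1} u" and "u 0 = 0"
    and "H2_with_derivs u u' (\<lambda>x. - \<i> * g x - of_real w * u x)"
    and "\<And>x. x \<in> {0..1} \<Longrightarrow> norm (u x) \<le> (1 + 2 * M\<^sup>2 * \<bar>w\<bar>) * L2_norm g
      \<and> norm (u' x) \<le> (1 + 2 * M\<^sup>2 * \<bar>w\<bar>) * L2_norm g"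
proof -
  obtain G1 G2 where G_cont: "continuous_on {0..1} G1" "continuous_on {0..1} G2"
    and g_int: "\<And>x. x \<in> {0..1} \<Longrightarrow> (g has_integral G1 x) {0..x}"
    and G1_int: "\<And>x. x \<in> {0..1} \<Longrightarrow> (G1 has_integral G2 x) {0..x}"
    and G_bound: "\<And>x. x \<in> {0..1} \<Longrightarrow> norm (G1 x) \<le> L2_norm g \<and> norm (G2 x) \<le> L2_norm g"
    using L2_01_iterated_antiderivatives[OF g] by blast
  (* -i G2 already has second derivative -i g, so the remainder solves v'' = -w v + r *)
  define r where "r x = \<i> * of_real w * G2 x" for x
  have r_cont: "continuous_on {0..1} r" unfolding r_def by (intro continuous_intros G_cont)
  have r_bound: "norm (r t) \<le> \<bar>w\<bar> * L2_norm g" if "t \<in> {0..1}" for t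
    unfolding r_def norm_mult using G_bound[OF that] by (simp add: mult_left_mono)
  define v where "v = variation_of_constants r"
  define v' where "v' = variation_of_constants' r"
  define u where "u = (\<lambda>x. - \<i> * G2 x + v x)"
  define u' where "u' = (\<lambda>x. - \<i> * G1 x + v' x)"
  have u_0: "u 0 = 0" "u' 0 = 0"
    using integral_unique[OF G1_int[of 0]] integral_unique[OF g_int[of 0]]
    by (simp_all add: u_def u'_def v_def v'_def variation_of_constants_0)
  have u_cont: "continuous_on {0..1} u"
    unfolding u_def v_def using variation_of_constants_has_vector_derivative(1)[OF r_cont]
    by (intro continuous_intros G_cont continuous_on_vector_derivative)
  have "H2_with_derivs u u' (\<lambda>x. - \<i> * g x - of_real w * u x)"
    unfolding H2_with_derivs_iff_has_integral u_0
  proof (intro conjI ballI)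
    have "L2_01 (\<lambda>x. (- \<i>) * g x + - of_real w * u x)"
      using g by (rule L2_01_add_continuous) (intro continuous_intros u_cont)
    then show "L2_01 (\<lambda>x. - \<i> * g x - of_real w * u x)" by simp
    fix x :: real assume x: "x \<in> {0..1}"
    note v_int = variation_of_constants_has_integral[OF r_cont x, folded v_def v'_def]
    show "(u' has_integral u x - 0) {0..x}"
      using has_integral_add[OF has_integral_mult_right[OF G1_int[OF x], of "- \<i>"] v_int(1)]
      by (simp add: u_def u'_def)
    have "((\<lambda>t. - \<i> * g t + (- of_real w * v t + r t)) has_integral u' x) {0..x}"
      using has_integral_add[OF has_integral_mult_right[OF g_int[OF x], of "- \<i>"] v_int(2)]
      by (simp add: u'_def)
    then show "((\<lambda>x. - \<i> * g x - of_real w * u x) has_integral u' x - 0) {0..x}"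
      by (simp add: u_def r_def algebra_simps)
  qed
  moreover have "norm (u x) \<le> (1 + 2 * M\<^sup>2 * \<bar>w\<bar>) * L2_norm g
      \<and> norm (u' x) \<le> (1 + 2 * M\<^sup>2 * \<bar>w\<bar>) * L2_norm g" if x: "x \<in> {0..1}" for x
    using G_bound[OF x] variation_of_constants_bound[OF M r_cont r_bound x]
    unfolding u_def u'_def v_def v'_def distrib_right
    by (intro conjI norm_triangle_mono) (simp_all add: norm_mult algebra_simps)
  ultimately show thesis using that u_cont u_0 by blast
qed

end

section \<open>The resolvent equation on the imaginary axis\<close>

lemma norm_add_imaginary_multiple_le:
  assumes "norm a \<le> B" "norm b \<le> B" "0 \<le> k"
  shows "norm (b + \<i> * of_real k * a) \<le> (1 + k) * B"
proof -
  have "norm (b + \<i> * of_real k * a) \<le> norm b + k * norm a"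
    using norm_triangle_ineq[of b "\<i> * of_real k * a"] \<open>0 \<le> k\<close> by (simp add: norm_mult)
  also have "\<dots> \<le> B + k * B"
    using assms by (intro add_mono mult_left_mono) auto
  finally show ?thesis by (simp add: algebra_simps)
qed

lemma A_graph_resolvent_equationD:
  assumes "A_graph k f u" and "ae01 (\<lambda>x. \<i> * of_real \<omega> * f x - u x = g x)"
  obtains f1 f2 where "H2_with_derivs f f1 f2" "f 0 = 0" "f1 1 = - \<i> * of_real k * f 1"
    and "ae01 (\<lambda>x. f2 x = - \<i> * g x - of_real \<omega> * f x)"
proof -
  obtain f1 f2 where f: "H2_with_derivs f f1 f2" "f 0 = 0" "f1 1 = - \<i> * of_real k * f 1"
    and u: "ae01 (\<lambda>x. u x = - \<i> * f2 x)"
    using assms(1) unfolding A_graph_def by blast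
  have "ae01 (\<lambda>x. f2 x = - \<i> * g x - of_real \<omega> * f x)"
  proof (rule ae01_elim2[OF u assms(2)])
    fix x assume u: "u x = - \<i> * f2 x" and "\<i> * of_real \<omega> * f x - u x = g x"
    have "f2 x = \<i> * u x" using u by simp
    also have "\<dots> = \<i> * (\<i> * of_real \<omega> * f x - g x)"
      using \<open>\<i> * of_real \<omega> * f x - u x = g x\<close> by (simp add: algebra_simps)
    also have "\<dots> = - \<i> * g x - of_real \<omega> * f x"
      by (simp add: algebra_simps)
    finally show "f2 x = - \<i> * g x - of_real \<omega> * f x" .
  qed
  with f that show thesis by blast
qed

lemma A_graph_resolvent_equationI:
  assumes "H2_with_derivs f f1 (\<lambda>x. - \<i> * g x - of_real \<omega> * f x)" "f 0 = 0"
    and "f1 1 = - \<i> * of_real k * f 1" and "L2_01 (\<lambda>x. \<i> * of_real \<omega> * f x - g x)"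
  shows "A_graph k f (\<lambda>x. \<i> * of_real \<omega> * f x - g x)"
proof -
  have "ae01 (\<lambda>x. \<i> * of_real \<omega> * f x - g x = - \<i> * (- \<i> * g x - of_real \<omega> * f x))"
    by (rule ae01_all) (simp add: algebra_simps)
  with assms show ?thesis
    unfolding A_graph_def by blast
qed

locale impedance_fundamental_system = fundamental_system +
  fixes k :: real
  assumes k_pos: "k > 0" and boundary_values_real: "Im (p 1) = 0" "Im (p' 1) = 0"
begin

definition boundary_determinant :: complex where
  "boundary_determinant = p' 1 + \<i> * of_real k * p 1"

lemma boundary_determinant_nonzero: "boundary_determinant \<noteq> 0"
proof
  assume "boundary_determinant = 0"
  then have "p' 1 + \<i> * of_real k * p 1 = 0" by (simp add: boundary_determinant_def)
  then have "Re (p' 1) = 0" "k * Re (p 1) = 0"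
    using boundary_values_real by (simp_all add: complex_eq_iff)
  then have "p' 1 = 0" "p 1 = 0"
    using k_pos boundary_values_real by (simp_all add: complex_eq_iff)
  then show False using wronskian_eq_1[of 1] by simp
qed

lemma homogeneous_boundary_solution_zero:
  assumes d: "\<And>x. x \<in> {0..1} \<Longrightarrow> (d has_vector_derivative d' x) (at x within {0..1})"
    and d': "\<And>x. x \<in> {0..1} \<Longrightarrow> (d' has_vector_derivative - of_real w * d x) (at x within {0..1})"
    and "d 0 = 0" and "d' 1 = - \<i> * of_real k * d 1" and x: "x \<in> {0..1}"
  shows "d x = 0"
proof -
  have "d' 0 * boundary_determinant = d' 1 + \<i> * of_real k * d 1"
    using homogeneous_solution_eq[OF d d' \<open>d 0 = 0\<close>, of 1]
    by (simp add: boundary_determinant_def algebra_simps)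
  also have "\<dots> = 0" using \<open>d' 1 = - \<i> * of_real k * d 1\<close> by simp
  finally have "d' 0 * boundary_determinant = 0" .
  then have "d' 0 = 0" using boundary_determinant_nonzero by simp
  then show ?thesis using homogeneous_solution_eq(1)[OF d d' \<open>d 0 = 0\<close> x] by simp
qed

lemma resolvent_solution_unique:
  assumes f: "H2_with_derivs f f1 f2" "f 0 = 0" "f1 1 = - \<i> * of_real k * f 1"
      "ae01 (\<lambda>x. f2 x = h x - of_real w * f x)"
    and g: "H2_with_derivs g g1 g2" "g 0 = 0" "g1 1 = - \<i> * of_real k * g 1"
      "ae01 (\<lambda>x. g2 x = h x - of_real w * g x)"
    and x: "x \<in> {0..1}"
  shows "f x = g x"
proof -
  define d d1 d2 where "d = (\<lambda>x. f x - g x)" and "d1 = (\<lambda>x. f1 x - g1 x)"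
    and "d2 = (\<lambda>x. f2 x - g2 x)"
  have f_int: "f1 integrable_on {0..1}" "f2 integrable_on {0..1}"
    and f1_eq: "\<And>y. y \<in> {0..1} \<Longrightarrow> f1 y = f1 0 + integral {0..y} f2"
    and f_eq: "\<And>y. y \<in> {0..1} \<Longrightarrow> f y = f 0 + integral {0..y} f1"
    using f(1) unfolding H2_with_derivs_def by blast+
  have g_int: "g1 integrable_on {0..1}" "g2 integrable_on {0..1}"
    and g1_eq: "\<And>y. y \<in> {0..1} \<Longrightarrow> g1 y = g1 0 + integral {0..y} g2"
    and g_eq: "\<And>y. y \<in> {0..1} \<Longrightarrow> g y = g 0 + integral {0..y} g1"
    using g(1) unfolding H2_with_derivs_def by blast+
  have sub: "F integrable_on {0..y}" if "F integrable_on {0..1}" "y \<in> {0..1}"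
    for F :: "real \<Rightarrow> complex" and y
    by (rule integrable_on_subinterval[OF that(1)]) (use that(2) in auto)
  have d1_int: "d1 integrable_on {0..1}"
    unfolding d1_def using f_int(1) g_int(1) by (rule integrable_diff)
  have d1_eq: "d1 y = d1 0 + integral {0..y} d2" if "y \<in> {0..1}" for y
    using f1_eq[OF that] g1_eq[OF that] sub[OF f_int(2) that] sub[OF g_int(2) that]
    by (simp add: d1_def d2_def integral_diff)
  have d_eq: "d y = d 0 + integral {0..y} d1" if "y \<in> {0..1}" for y
    using f_eq[OF that] g_eq[OF that] sub[OF f_int(1) that] sub[OF g_int(1) that]
    by (simp add: d_def d1_def integral_diff)
  have "ae01 (\<lambda>x. d2 x = - of_real w * d x)"
    by (rule ae01_elim2[OF f(4) g(4)]) (simp add: d_def d2_def algebra_simps)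
  note d_derivatives = weak_solution_has_vector_derivatives[OF d1_int d1_eq d_eq this]
  have "d x = 0"
  proof (rule homogeneous_boundary_solution_zero[OF d_derivatives(2) d_derivatives(1) _ _ x])
    show "d 0 = 0" using f(2) g(2) by (simp add: d_def)
    show "d1 1 = - \<i> * of_real k * d 1" using f(3) g(3) by (simp add: d_def d1_def algebra_simps)
  qed
  then show ?thesis by (simp add: d_def)
qed

definition resolvent_bound :: "real \<Rightarrow> real" where
  "resolvent_bound M = (1 + M * (1 + k) / norm boundary_determinant) * (1 + 2 * M\<^sup>2 * \<bar>w\<bar>)"

lemma boundary_correction_norm_le:
  assumes M: "fundamental_bound M" and x: "x \<in> {0..1}"
    and u: "norm (u x) \<le> B" "norm (u 1) \<le> B" "norm (u' 1) \<le> B"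
    and \<alpha>: "\<alpha> = - (u' 1 + \<i> * of_real k * u 1) / boundary_determinant"
  shows "norm (u x + \<alpha> * p x) \<le> (1 + M * (1 + k) / norm boundary_determinant) * B"
proof -
  have "norm (u' 1 + \<i> * of_real k * u 1) \<le> (1 + k) * B"
    using u k_pos by (intro norm_add_imaginary_multiple_le) auto
  then have "norm \<alpha> \<le> (1 + k) * B / norm boundary_determinant"
    unfolding \<alpha> norm_divide norm_minus_cancel by (rule divide_right_mono) simp
  then have "norm (\<alpha> * p x) \<le> (1 + k) * B / norm boundary_determinant * M"
    using M x unfolding fundamental_bound_def by (intro norm_mult_le_mult) auto
  then have "norm (u x + \<alpha> * p x) \<le> B + (1 + k) * B / norm boundary_determinant * M"
    using u(1) norm_triangle_ineq[of "u x" "\<alpha> * p x"] by simp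
  then show ?thesis
    using boundary_determinant_nonzero by (simp add: field_simps)
qed

lemma resolvent_solution_exists:
  fixes g :: "real \<Rightarrow> complex"
  assumes g: "L2_01 g" and M: "fundamental_bound M"
  obtains f f1 where "continuous_on {0..1} f"
    and "H2_with_derivs f f1 (\<lambda>x. - \<i> * g x - of_real w * f x)"
    and "f 0 = 0" and "f1 1 = - \<i> * of_real k * f 1"
    and "\<And>x. x \<in> {0..1} \<Longrightarrow> norm (f x) \<le> resolvent_bound M * L2_norm g"
proof -
  obtain u u' where u_cont: "continuous_on {0..1} u" and "u 0 = 0"
    and u: "H2_with_derivs u u' (\<lambda>x. - \<i> * g x - of_real w * u x)"
    and u_bound: "\<And>x. x \<in> {0..1} \<Longrightarrow> norm (u x) \<le> (1 + 2 * M\<^sup>2 * \<bar>w\<bar>) * L2_norm g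
      \<and> norm (u' x) \<le> (1 + 2 * M\<^sup>2 * \<bar>w\<bar>) * L2_norm g"
    using particular_solution[OF g M] by blast
  define \<alpha> where "\<alpha> = - (u' 1 + \<i> * of_real k * u 1) / boundary_determinant"
  define f where "f = (\<lambda>x. u x + \<alpha> * p x)"
  define f1 where "f1 = (\<lambda>x. u' x + \<alpha> * p' x)"
  show thesis
  proof
    show "continuous_on {0..1} f"
      unfolding f_def by (intro continuous_intros u_cont continuous_on_fundamental_system)
    show "H2_with_derivs f f1 (\<lambda>x. - \<i> * g x - of_real w * f x)"
      unfolding f_def f1_def using u by (rule H2_with_derivs_add_homogeneous)
    show "f 0 = 0" by (simp add: f_def \<open>u 0 = 0\<close> initial_values)
    have "f1 1 + \<i> * of_real k * f 1 = (u' 1 + \<i> * of_real k * u 1) + \<alpha> * boundary_determinant"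
      by (simp add: f_def f1_def boundary_determinant_def algebra_simps)
    also have "\<dots> = 0" using boundary_determinant_nonzero by (simp add: \<alpha>_def)
    finally show "f1 1 = - \<i> * of_real k * f 1" by (simp add: eq_neg_iff_add_eq_0)
  next
    fix x :: real assume x: "x \<in> {0..1}"
    have "norm (f x) \<le> (1 + M * (1 + k) / norm boundary_determinant)
        * ((1 + 2 * M\<^sup>2 * \<bar>w\<bar>) * L2_norm g)"
      unfolding f_def using u_bound[of 1] u_bound[OF x]
      by (intro boundary_correction_norm_le[where u = u and u' = u', OF M x _ _ _ \<alpha>_def]) auto
    then show "norm (f x) \<le> resolvent_bound M * L2_norm g"
      by (simp add: resolvent_bound_def mult.assoc)
  qed
qed

lemma resolvent_equation_solvable:
  assumes g: "L2_01 g" and M: "fundamental_bound M"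
  shows "\<exists>f u. A_graph k f u \<and> ae01 (\<lambda>x. \<i> * of_real w * f x - u x = g x)"
proof -
  obtain f f1 where f: "continuous_on {0..1} f"
    "H2_with_derivs f f1 (\<lambda>x. - \<i> * g x - of_real w * f x)" "f 0 = 0" "f1 1 = - \<i> * of_real k * f 1"
    using resolvent_solution_exists[OF g M] by blast
  have "L2_01 (\<lambda>x. (-1) * g x + \<i> * of_real w * f x)"
    using g by (rule L2_01_add_continuous) (intro continuous_intros f(1))
  then have "L2_01 (\<lambda>x. \<i> * of_real w * f x - g x)" by simp
  then have "A_graph k f (\<lambda>x. \<i> * of_real w * f x - g x)"
    by (rule A_graph_resolvent_equationI[OF f(2-4)])
  moreover have "ae01 (\<lambda>x. \<i> * of_real w * f x - (\<i> * of_real w * f x - g x) = g x)"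
    by (rule ae01_all) simp
  ultimately show ?thesis by blast
qed

lemma resolvent_equation_norm_bound:
  assumes g: "L2_01 g" and M: "fundamental_bound M"
    and "A_graph k f u" and "ae01 (\<lambda>x. \<i> * of_real w * f x - u x = g x)"
  shows "L2_norm f \<le> resolvent_bound M * L2_norm g"
proof -
  obtain f1 f2 where f: "H2_with_derivs f f1 f2" "f 0 = 0" "f1 1 = - \<i> * of_real k * f 1"
    "ae01 (\<lambda>x. f2 x = - \<i> * g x - of_real w * f x)"
    using A_graph_resolvent_equationD[OF assms(3,4)] by blast
  obtain fc f1c where fc: "continuous_on {0..1} fc"
    "H2_with_derivs fc f1c (\<lambda>x. - \<i> * g x - of_real w * fc x)" "fc 0 = 0"
    "f1c 1 = - \<i> * of_real k * fc 1"
    and fc_bound: "\<And>x. x \<in> {0..1} \<Longrightarrow> norm (fc x) \<le> resolvent_bound M * L2_norm g"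
    using resolvent_solution_exists[OF g M] by blast
  have "ae01 (\<lambda>x. - \<i> * g x - of_real w * fc x = - \<i> * g x - of_real w * fc x)"
    by (rule ae01_all) (rule refl)
  from resolvent_solution_unique[OF f fc(2-4) this] have "L2_norm f = L2_norm fc"
    by (rule L2_norm_cong)
  also have "\<dots> \<le> resolvent_bound M * L2_norm g"
    using fc(1) fc_bound by (rule L2_norm_le_bound)
  finally show ?thesis .
qed

lemma imaginary_axis_in_resolvent_set: "\<i> * of_real w \<in> resolvent_set_A k"
proof -
  obtain M where "fundamental_bound M" using fundamental_bound_exists by blast
  then show ?thesis
    unfolding resolvent_set_A_def
    using resolvent_equation_solvable resolvent_equation_norm_bound by blast
qed

end

section \<open>Explicit fundamental systems\<close>

definition real_fundamental_system ::
  "real \<Rightarrow> (real \<Rightarrow> real) \<Rightarrow> (real \<Rightarrow> real) \<Rightarrow> (real \<Rightarrow> real) \<Rightarrow> (real \<Rightarrow> real) \<Rightarrow> bool" where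
  "real_fundamental_system w P P' Q Q' \<longleftrightarrow>
     (\<forall>x. (P has_real_derivative P' x) (at x)) \<and> (\<forall>x. (P' has_real_derivative - w * P x) (at x)) \<and>
     (\<forall>x. (Q has_real_derivative Q' x) (at x)) \<and> (\<forall>x. (Q' has_real_derivative - w * Q x) (at x)) \<and>
     P 0 = 0 \<and> P' 0 = 1 \<and> Q 0 = 1 \<and> Q' 0 = 0"

lemma impedance_fundamental_system_of_real:
  assumes "real_fundamental_system w P P' Q Q'" and "k > 0"
  shows "impedance_fundamental_system w (\<lambda>x. of_real (P x)) (\<lambda>x. of_real (P' x))
    (\<lambda>x. of_real (Q x)) (\<lambda>x. of_real (Q' x)) k"
proof -
  have P: "\<And>x. (P has_real_derivative P' x) (at x)" "\<And>x. (P' has_real_derivative - w * P x) (at x)"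
    and Q: "\<And>x. (Q has_real_derivative Q' x) (at x)" "\<And>x. (Q' has_real_derivative - w * Q x) (at x)"
    and initial: "P 0 = 0" "P' 0 = 1" "Q 0 = 1" "Q' 0 = 0"
    using assms(1) unfolding real_fundamental_system_def by blast+
  have "((\<lambda>x. complex_of_real (P' x)) has_vector_derivative - of_real w * of_real (P x)) (at x)"
    and "((\<lambda>x. complex_of_real (Q' x)) has_vector_derivative - of_real w * of_real (Q x)) (at x)" for x
    using has_vector_derivative_of_real[OF P(2)] has_vector_derivative_of_real[OF Q(2)] by simp_all
  then show ?thesis
    by unfold_locales
      (use assms(2) initial in \<open>auto intro!: has_vector_derivative_of_real P(1) Q(1)\<close>)
qed

lemma real_fundamental_system_exists: "\<exists>P P' Q Q'. real_fundamental_system w P P' Q Q'"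
proof (cases w "0::real" rule: linorder_cases)
  case less
  define l where "l = sqrt (- w)"
  have "l > 0" and w: "w = - (l * l)" using less by (simp_all add: l_def)
  have "real_fundamental_system w (\<lambda>x. sinh (l * x) / l) (\<lambda>x. cosh (l * x))
      (\<lambda>x. cosh (l * x)) (\<lambda>x. l * sinh (l * x))"
    unfolding real_fundamental_system_def w using \<open>l > 0\<close>
    by (auto intro!: derivative_eq_intros)
  then show ?thesis by blast
next
  case equal
  have "real_fundamental_system w (\<lambda>x. x) (\<lambda>x. 1) (\<lambda>x. 1) (\<lambda>x. 0)"
    unfolding real_fundamental_system_def equal by (auto intro!: derivative_eq_intros)
  then show ?thesis by blast
next
  case greater
  define l where "l = sqrt w"
  have "l > 0" and w: "w = l * l" using greater by (simp_all add: l_def)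
  have "real_fundamental_system w (\<lambda>x. sin (l * x) / l) (\<lambda>x. cos (l * x))
      (\<lambda>x. cos (l * x)) (\<lambda>x. - (l * sin (l * x)))"
    unfolding real_fundamental_system_def w using \<open>l > 0\<close>
    by (auto intro!: derivative_eq_intros)
  then show ?thesis by blast
qed

theorem lemma1:
  fixes k :: real
  assumes "k > 0"
  shows "\<forall>\<omega>::real. \<i> * complex_of_real \<omega> \<in> resolvent_set_A k"
proof
  fix \<omega> :: real
  obtain P P' Q Q' where "real_fundamental_system \<omega> P P' Q Q'"
    using real_fundamental_system_exists by blast
  then interpret impedance_fundamental_system \<omega> "\<lambda>x. of_real (P x)" "\<lambda>x. of_real (P' x)"
    "\<lambda>x. of_real (Q x)" "\<lambda>x. of_real (Q' x)" k
    using assms by (rule impedance_fundamental_system_of_real)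
  show "\<i> * complex_of_real \<omega> \<in> resolvent_set_A k"
    by (rule imaginary_axis_in_resolvent_set)
qed

end
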